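(* Let $I_A$ and $I_B$ be two MatP instances with the same underlying graph that differ only in the preference order of a single agent $x$. Let $M$ be a matching that leaves $x$ unmatched. Then (1) $M$ is popular for $I_A$ if and only if $M$ is popular for $I_B$, and (2) $M$ is dominant for $I_A$ if and only if $M$ is dominant for $I_B$.
   Context: An instance $I$ of matchings under preferences (MatP) consists of a bipartite graph $G^I=(W\cup F,E^I)$ with disjoint finite vertex sets $W$ (workers) and $F$ (firms), whose elements are called agents, together with, for each agent $x$, a strict linear order $\succ_x^I$ over the set $N_x^I$ of neighbors of $x$ in $G^I$. A matching is a set of pairwise disjoint edges; $M(x)$ denotes the partner of a matched agent $x$. Agent $x$ prefers $M$ over $M'$ if $x$ is matched in $M$ and unmatched in $M'$, or matched in both with $M(x)\succ_x M'(x)$. Define $\mathrm{vote}^I_x(M,M')=1$ if $x$ prefers $M$ over $M'$, $-1$ if $x$ prefers $M'$ over $M$, and $0$ otherwise, and $\phi^I(M,M')=\sum_{x\in W\cup F}\mathrm{vote}^I_x(M,M')$. A matching $M$ of $G^I$ is popular for $I$ if $\phi^I(M,M')\ge 0$ for every matching $M'$ of $G^I$; it is dominant for $I$ if it is popular and $\phi^I(M,M')>0$ for every matching $M'$ of $G^I$ with $|M'|>|M|$. *)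

theory Defs
  imports Main
begin

text \<open>An instance of MatP: worker set W, firm set F (disjoint, finite), edge set E
  of pairs (w,f) with w in W and f in F, and for every agent x a strict preference
  relation P x, where P x a b means a is strictly preferred to b by x
  (a strict linear order on the neighbours of x).\<close>

definition neighbors :: "('a \<times> 'a) set \<Rightarrow> 'a \<Rightarrow> 'a set" where
  "neighbors E x = {y. (x, y) \<in> E \<or> (y, x) \<in> E}"

definition matp_instance ::
  "'a set \<Rightarrow> 'a set \<Rightarrow> ('a \<times> 'a) set \<Rightarrow> ('a \<Rightarrow> 'a \<Rightarrow> 'a \<Rightarrow> bool) \<Rightarrow> bool" where
  "matp_instance W F E P \<longleftrightarrow>
     finite W \<and> finite F \<and> W \<inter> F = {} \<and> E \<subseteq> W \<times> F \<and>
     (\<forall>x \<in> W \<union> F.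
        (\<forall>a b. P x a b \<longrightarrow> a \<in> neighbors E x \<and> b \<in> neighbors E x) \<and>
        (\<forall>a. \<not> P x a a) \<and>
        (\<forall>a b c. P x a b \<longrightarrow> P x b c \<longrightarrow> P x a c) \<and>
        (\<forall>a \<in> neighbors E x. \<forall>b \<in> neighbors E x. a \<noteq> b \<longrightarrow> P x a b \<or> P x b a))"

definition is_matching :: "('a \<times> 'a) set \<Rightarrow> ('a \<times> 'a) set \<Rightarrow> bool" where
  "is_matching E M \<longleftrightarrow> M \<subseteq> E \<and>
     (\<forall>e \<in> M. \<forall>e' \<in> M. e \<noteq> e' \<longrightarrow> {fst e, snd e} \<inter> {fst e', snd e'} = {})"

definition matched :: "('a \<times> 'a) set \<Rightarrow> 'a \<Rightarrow> bool" where
  "matched M x \<longleftrightarrow> (\<exists>y. (x, y) \<in> M \<or> (y, x) \<in> M)"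

definition partner :: "('a \<times> 'a) set \<Rightarrow> 'a \<Rightarrow> 'a" where
  "partner M x = (THE y. (x, y) \<in> M \<or> (y, x) \<in> M)"

definition prefers ::
  "('a \<Rightarrow> 'a \<Rightarrow> 'a \<Rightarrow> bool) \<Rightarrow> 'a \<Rightarrow> ('a \<times> 'a) set \<Rightarrow> ('a \<times> 'a) set \<Rightarrow> bool" where
  "prefers P x M M' \<longleftrightarrow> matched M x \<and>
     (\<not> matched M' x \<or> P x (partner M x) (partner M' x))"

definition vote ::
  "('a \<Rightarrow> 'a \<Rightarrow> 'a \<Rightarrow> bool) \<Rightarrow> 'a \<Rightarrow> ('a \<times> 'a) set \<Rightarrow> ('a \<times> 'a) set \<Rightarrow> int" where
  "vote P x M M' = (if prefers P x M M' then 1 else if prefers P x M' M then -1 else 0)"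

definition phi ::
  "'a set \<Rightarrow> 'a set \<Rightarrow> ('a \<Rightarrow> 'a \<Rightarrow> 'a \<Rightarrow> bool) \<Rightarrow> ('a \<times> 'a) set \<Rightarrow> ('a \<times> 'a) set \<Rightarrow> int" where
  "phi W F P M M' = (\<Sum>x \<in> W \<union> F. vote P x M M')"

definition popular ::
  "'a set \<Rightarrow> 'a set \<Rightarrow> ('a \<times> 'a) set \<Rightarrow> ('a \<Rightarrow> 'a \<Rightarrow> 'a \<Rightarrow> bool) \<Rightarrow> ('a \<times> 'a) set \<Rightarrow> bool" where
  "popular W F E P M \<longleftrightarrow> is_matching E M \<and>
     (\<forall>M'. is_matching E M' \<longrightarrow> phi W F P M M' \<ge> 0)"

definition dominant ::
  "'a set \<Rightarrow> 'a set \<Rightarrow> ('a \<times> 'a) set \<Rightarrow> ('a \<Rightarrow> 'a \<Rightarrow> 'a \<Rightarrow> bool) \<Rightarrow> ('a \<times> 'a) set \<Rightarrow> bool" where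
  "dominant W F E P M \<longleftrightarrow> popular W F E P M \<and>
     (\<forall>M'. is_matching E M' \<longrightarrow> card M' > card M \<longrightarrow> phi W F P M M' > 0)"

end

theory Submission
  imports Defs
begin

text \<open>An agent that is unmatched in \<open>M\<close> never prefers \<open>M\<close>, and it prefers any other matching
  exactly when it is matched there; so its vote in \<open>M\<close> versus \<open>M'\<close> ignores its preferences.
  Hence \<open>\<phi>(M, M')\<close> is the same in both instances for every \<open>M'\<close>, and popularity and
  dominance of \<open>M\<close> are defined through \<open>\<phi>(M, \<cdot>)\<close> alone.\<close>

lemma vote_cong_prefs:
  assumes "P x = Q x"
  shows "vote P x M M' = vote Q x M M'"
  using assms by (simp add: vote_def prefers_def)

lemma vote_unmatched_indep_prefs:
  assumes "\<not> matched M x"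
  shows "vote P x M M' = vote Q x M M'"
  using assms by (simp add: vote_def prefers_def)

lemma phi_eq_if_prefs_agree_off_unmatched:
  assumes "\<forall>y. y \<noteq> x \<longrightarrow> P y = Q y" and "\<not> matched M x"
  shows "phi W F P M M' = phi W F Q M M'"
proof -
  have "vote P y M M' = vote Q y M M'" for y
  proof (cases "y = x")
    case True
    with assms(2) show ?thesis by (simp add: vote_unmatched_indep_prefs)
  next
    case False
    with assms(1) have "P y = Q y" by blast
    then show ?thesis by (rule vote_cong_prefs)
  qed
  then show ?thesis
    unfolding phi_def by simp
qed

theorem lemma3:
  fixes W F :: "'a set" and E M :: "('a \<times> 'a) set"
    and PA PB :: "'a \<Rightarrow> 'a \<Rightarrow> 'a \<Rightarrow> bool" and x :: 'a
  assumes "matp_instance W F E PA"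
    and "matp_instance W F E PB"
    and "x \<in> W \<union> F"
    and "\<forall>y. y \<noteq> x \<longrightarrow> PA y = PB y"
    and "is_matching E M"
    and "\<not> matched M x"
  shows "(popular W F E PA M \<longleftrightarrow> popular W F E PB M) \<and>
         (dominant W F E PA M \<longleftrightarrow> dominant W F E PB M)"
proof -
  have "phi W F PA M M' = phi W F PB M M'" for M'
    using phi_eq_if_prefs_agree_off_unmatched[OF assms(4,6)] .
  then show ?thesis
    unfolding dominant_def popular_def by simp
qed

end
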